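(* Let $n\ge2$, $k\in\{1,\ldots,n\}$, $r\in\mathbb{R}$, and $x^0\in\mathbb{R}^n$ with $x^0_1\ge\cdots\ge x^0_n$ and $\sum_{i=1}^k x^0_i>r$. Suppose that along the trajectory of the ESGS procedure a transition from $(k_0,k_1)$ to $(k_0,k_1+1)$ occurs. Then the optimal index pair $(\bar k_0,\bar k_1)$, i.e. the index pair satisfying all of $\mathtt{kkt}_1,\ldots,\mathtt{kkt}_5$, satisfies $\bar k_0\le k_0$ and $\bar k_1\ge k_1$.
   Context: Conventions: $x^0_0:=+\infty$, $x^0_{n+1}:=-\infty$. For $k_0\in\{0,\ldots,k-1\}$ and $k_1\in\{k,\ldots,n\}$ define $S_\alpha=\sum_{i=1}^{k_0}x^0_i-r$, $S_\beta=\sum_{i=k_0+1}^{k_1}x^0_i$, $\rho=k_0(k_1-k_0)+(k-k_0)^2$, $\theta(k_0,k_1)=(k_0S_\beta-(k-k_0)S_\alpha)/\rho$, $\lambda(k_0,k_1)=((k-k_0)S_\beta+(k_1-k_0)S_\alpha)/\rho$. KKT indicators: $\mathtt{kkt}_1$: $\lambda>0$; $\mathtt{kkt}_2$: $x^0_{k_0}>\theta+\lambda$; $\mathtt{kkt}_3$: $\theta+\lambda\ge x^0_{k_0+1}$; $\mathtt{kkt}_4$: $x^0_{k_1}\ge\theta$; $\mathtt{kkt}_5$: $\theta>x^0_{k_1+1}$. An index pair satisfying all five indicators yields the solution of the sorted projection problem. ESGS trajectory: start at $(k_0,k_1)=(k-1,k)$ and repeat: if $\mathtt{kkt}_2\wedge\mathtt{kkt}_5$,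 stop; else if $\mathtt{kkt}_2$, $k_1\gets k_1+1$; else $k_0\gets k_0-1$. *)

theory Defs
  imports Complex_Main "HOL-Library.Extended_Real"
begin

text \<open>Vector x0 in R^n is represented as x :: nat => real using indices 1..n.
  Extended vector with the conventions x_0 = +infinity, x_(n+1) = -infinity.\<close>
definition xext :: "nat \<Rightarrow> (nat \<Rightarrow> real) \<Rightarrow> nat \<Rightarrow> ereal" where
  "xext n x i = (if i = 0 then \<infinity> else if i = n + 1 then -\<infinity> else ereal (x i))"

definition S_alpha :: "(nat \<Rightarrow> real) \<Rightarrow> real \<Rightarrow> nat \<Rightarrow> real" where
  "S_alpha x r k0 = (\<Sum>i=1..k0. x i) - r"

definition S_beta :: "(nat \<Rightarrow> real) \<Rightarrow> nat \<Rightarrow> nat \<Rightarrow> real" where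
  "S_beta x k0 k1 = (\<Sum>i=k0+1..k1. x i)"

definition rho :: "nat \<Rightarrow> nat \<Rightarrow> nat \<Rightarrow> real" where
  "rho k k0 k1 = real k0 * (real k1 - real k0) + (real k - real k0)^2"

definition theta :: "nat \<Rightarrow> (nat \<Rightarrow> real) \<Rightarrow> real \<Rightarrow> nat \<Rightarrow> nat \<Rightarrow> real" where
  "theta k x r k0 k1 =
     (real k0 * S_beta x k0 k1 - (real k - real k0) * S_alpha x r k0) / rho k k0 k1"

definition lam :: "nat \<Rightarrow> (nat \<Rightarrow> real) \<Rightarrow> real \<Rightarrow> nat \<Rightarrow> nat \<Rightarrow> real" where
  "lam k x r k0 k1 =
     ((real k - real k0) * S_beta x k0 k1 + (real k1 - real k0) * S_alpha x r k0) / rho k k0 k1"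

definition kkt1 :: "nat \<Rightarrow> nat \<Rightarrow> (nat \<Rightarrow> real) \<Rightarrow> real \<Rightarrow> nat \<Rightarrow> nat \<Rightarrow> bool" where
  "kkt1 n k x r k0 k1 \<longleftrightarrow> lam k x r k0 k1 > 0"

definition kkt2 :: "nat \<Rightarrow> nat \<Rightarrow> (nat \<Rightarrow> real) \<Rightarrow> real \<Rightarrow> nat \<Rightarrow> nat \<Rightarrow> bool" where
  "kkt2 n k x r k0 k1 \<longleftrightarrow> xext n x k0 > ereal (theta k x r k0 k1 + lam k x r k0 k1)"

definition kkt3 :: "nat \<Rightarrow> nat \<Rightarrow> (nat \<Rightarrow> real) \<Rightarrow> real \<Rightarrow> nat \<Rightarrow> nat \<Rightarrow> bool" where
  "kkt3 n k x r k0 k1 \<longleftrightarrow> ereal (theta k x r k0 k1 + lam k x r k0 k1) \<ge> xext n x (k0 + 1)"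

definition kkt4 :: "nat \<Rightarrow> nat \<Rightarrow> (nat \<Rightarrow> real) \<Rightarrow> real \<Rightarrow> nat \<Rightarrow> nat \<Rightarrow> bool" where
  "kkt4 n k x r k0 k1 \<longleftrightarrow> xext n x k1 \<ge> ereal (theta k x r k0 k1)"

definition kkt5 :: "nat \<Rightarrow> nat \<Rightarrow> (nat \<Rightarrow> real) \<Rightarrow> real \<Rightarrow> nat \<Rightarrow> nat \<Rightarrow> bool" where
  "kkt5 n k x r k0 k1 \<longleftrightarrow> ereal (theta k x r k0 k1) > xext n x (k1 + 1)"

definition all_kkt :: "nat \<Rightarrow> nat \<Rightarrow> (nat \<Rightarrow> real) \<Rightarrow> real \<Rightarrow> nat \<Rightarrow> nat \<Rightarrow> bool" where
  "all_kkt n k x r k0 k1 \<longleftrightarrow> kkt1 n k x r k0 k1 \<and> kkt2 n k x r k0 k1 \<and> kkt3 n k x r k0 k1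
      \<and> kkt4 n k x r k0 k1 \<and> kkt5 n k x r k0 k1"

inductive esgs_visits :: "nat \<Rightarrow> nat \<Rightarrow> (nat \<Rightarrow> real) \<Rightarrow> real \<Rightarrow> nat \<Rightarrow> nat \<Rightarrow> bool"
  for n k x r where
  start: "esgs_visits n k x r (k - 1) k"
| inc: "esgs_visits n k x r k0 k1 \<Longrightarrow> \<not> (kkt2 n k x r k0 k1 \<and> kkt5 n k x r k0 k1)
        \<Longrightarrow> kkt2 n k x r k0 k1 \<Longrightarrow> esgs_visits n k x r k0 (k1 + 1)"
| dec: "esgs_visits n k x r k0 k1 \<Longrightarrow> \<not> (kkt2 n k x r k0 k1 \<and> kkt5 n k x r k0 k1)
        \<Longrightarrow> \<not> kkt2 n k x r k0 k1 \<Longrightarrow> esgs_visits n k x r (k0 - 1) k1"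

definition esgs_inc_transition :: "nat \<Rightarrow> nat \<Rightarrow> (nat \<Rightarrow> real) \<Rightarrow> real \<Rightarrow> nat \<Rightarrow> nat \<Rightarrow> bool" where
  "esgs_inc_transition n k x r k0 k1 \<longleftrightarrow>
     esgs_visits n k x r k0 k1 \<and> \<not> (kkt2 n k x r k0 k1 \<and> kkt5 n k x r k0 k1) \<and> kkt2 n k x r k0 k1"

end

theory Submission imports Defs begin

text \<open>Every index pair visited by ESGS stays in the box \<open>[kb0, k) \<times> [k, kb1]\<close> spanned by
  the optimal pair \<open>(kb0, kb1)\<close>. An increase of \<open>k1\<close> happens only when \<open>kkt5\<close> fails,
  and a decrease of \<open>k0\<close> only when \<open>kkt2\<close> fails; so it suffices that \<open>kkt5\<close> holds on the
  edge \<open>k1 = kb1\<close> and \<open>kkt2\<close> on the edge \<open>k0 = kb0\<close> of the box. Both follow from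
  one-step identities for \<open>\<theta>\<close> and \<open>\<theta> + \<lambda>\<close>: starting from \<open>kkt3\<close> at \<open>(kb0, kb1)\<close>,
  \<open>\<theta>\<close> increases with \<open>k0\<close> along \<open>k1 = kb1\<close>; starting from \<open>kkt4\<close>, \<open>\<theta>\<close> decreases as \<open>k1\<close>
  moves down along \<open>k0 = kb0\<close>, and \<open>\<theta> + \<lambda> = (S\<^sub>\<alpha> + k \<theta>) / k0\<close> decreases with it.\<close>

text \<open>\<open>\<rho>\<close>, \<open>\<theta>\<close> and \<open>\<theta> + \<lambda>\<close> as rational functions of \<open>K = k\<close>, \<open>p = k0\<close>, \<open>m = k1\<close>,
  \<open>a = S\<^sub>\<alpha>\<close>, \<open>b = S\<^sub>\<beta>\<close>; moving \<open>x\<^sub>k\<^sub>0\<^sub>+\<^sub>1\<close> from \<open>S\<^sub>\<beta>\<close> to \<open>S\<^sub>\<alpha>\<close> (or appending \<open>x\<^sub>k\<^sub>1\<^sub>+\<^sub>1\<close> to \<open>S\<^sub>\<beta>\<close>)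
  then becomes a shift by \<open>y\<close>, and the one-step identities are identities of rational functions.\<close>

definition rho_of :: "real \<Rightarrow> real \<Rightarrow> real \<Rightarrow> real" where
  "rho_of K p m = p * (m - p) + (K - p)\<^sup>2"

definition theta_of :: "real \<Rightarrow> real \<Rightarrow> real \<Rightarrow> real \<Rightarrow> real \<Rightarrow> real" where
  "theta_of K p m a b = (p * b - (K - p) * a) / rho_of K p m"

definition mu_of :: "real \<Rightarrow> real \<Rightarrow> real \<Rightarrow> real \<Rightarrow> real \<Rightarrow> real" where
  "mu_of K p m a b = (K * b + (m - K) * a) / rho_of K p m"

lemma theta_of_shift_p:
  assumes "rho_of K p m \<noteq> 0" "rho_of K (p + 1) m \<noteq> 0"
  shows "rho_of K (p + 1) m * (theta_of K (p + 1) m (a + y) (b - y) - theta_of K p m a b)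
       = K * (mu_of K p m a b - y)"
  using assms unfolding theta_of_def mu_of_def
  by (simp add: field_simps) (simp add: rho_of_def power2_eq_square algebra_simps)

lemma mu_of_shift_p:
  assumes "rho_of K p m \<noteq> 0" "rho_of K (p + 1) m \<noteq> 0"
  shows "rho_of K (p + 1) m * (mu_of K (p + 1) m (a + y) (b - y) - y)
       = rho_of K p m * (mu_of K p m a b - y)"
  using assms unfolding mu_of_def
  by (simp add: field_simps) (simp add: rho_of_def power2_eq_square algebra_simps)

lemma theta_of_shift_m:
  assumes "rho_of K p m \<noteq> 0" "rho_of K p (m + 1) \<noteq> 0"
  shows "rho_of K p m * (theta_of K p (m + 1) a (b + y) - theta_of K p m a b)
       = p * (y - theta_of K p (m + 1) a (b + y))"
  using assms unfolding theta_of_def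
  by (simp add: field_simps) (simp add: rho_of_def power2_eq_square algebra_simps)

lemma mu_of_eq_theta_of:
  assumes "rho_of K p m \<noteq> 0" "p \<noteq> 0"
  shows "mu_of K p m a b = (a + K * theta_of K p m a b) / p"
  using assms unfolding theta_of_def mu_of_def
  by (simp add: field_simps) (simp add: rho_of_def power2_eq_square algebra_simps)

lemma rho_eq_rho_of: "rho k k0 k1 = rho_of (real k) (real k0) (real k1)"
  unfolding rho_def rho_of_def ..

lemma theta_eq_theta_of:
  "theta k x r k0 k1 = theta_of (real k) (real k0) (real k1) (S_alpha x r k0) (S_beta x k0 k1)"
  unfolding theta_def theta_of_def rho_eq_rho_of ..

lemma theta_plus_lam_eq_mu_of:
  "theta k x r k0 k1 + lam k x r k0 k1
     = mu_of (real k) (real k0) (real k1) (S_alpha x r k0) (S_beta x k0 k1)"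
  unfolding theta_def lam_def mu_of_def rho_eq_rho_of
  by (simp add: add_divide_distrib [symmetric] algebra_simps)

lemma rho_pos: "k0 < k \<Longrightarrow> k0 \<le> k1 \<Longrightarrow> rho k k0 k1 > 0"
  unfolding rho_def by (simp add: add_nonneg_pos)

lemma S_alpha_Suc: "S_alpha x r (Suc j) = S_alpha x r j + x (Suc j)"
  unfolding S_alpha_def by simp

lemma S_beta_Suc_left: "Suc j \<le> k1 \<Longrightarrow> S_beta x (Suc j) k1 = S_beta x j k1 - x (Suc j)"
  unfolding S_beta_def by (simp add: sum.atLeast_Suc_atMost)

lemma S_beta_Suc_right: "k0 \<le> k1 \<Longrightarrow> S_beta x k0 (Suc k1) = S_beta x k0 k1 + x (Suc k1)"
  unfolding S_beta_def by simp

lemma theta_Suc_k0: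
  assumes "Suc j < k" "Suc j \<le> k1"
  shows "rho k (Suc j) k1 * (theta k x r (Suc j) k1 - theta k x r j k1)
       = real k * (theta k x r j k1 + lam k x r j k1 - x (Suc j))"
proof -
  have "rho_of (real k) (real j) (real k1) \<noteq> 0" "rho_of (real k) (real j + 1) (real k1) \<noteq> 0"
    using rho_pos[of j k k1] rho_pos[of "Suc j" k k1] assms by (auto simp: rho_eq_rho_of add.commute)
  from theta_of_shift_p[OF this, of "S_alpha x r j" "x (Suc j)" "S_beta x j k1"] show ?thesis
    unfolding theta_plus_lam_eq_mu_of unfolding theta_eq_theta_of rho_eq_rho_of
    using assms by (simp add: S_alpha_Suc S_beta_Suc_left add.commute)
qed

lemma theta_plus_lam_Suc_k0:
  assumes "Suc j < k" "Suc j \<le> k1"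
  shows "rho k (Suc j) k1 * (theta k x r (Suc j) k1 + lam k x r (Suc j) k1 - x (Suc j))
       = rho k j k1 * (theta k x r j k1 + lam k x r j k1 - x (Suc j))"
proof -
  have "rho_of (real k) (real j) (real k1) \<noteq> 0" "rho_of (real k) (real j + 1) (real k1) \<noteq> 0"
    using rho_pos[of j k k1] rho_pos[of "Suc j" k k1] assms by (auto simp: rho_eq_rho_of add.commute)
  from mu_of_shift_p[OF this, of "S_alpha x r j" "x (Suc j)" "S_beta x j k1"] show ?thesis
    unfolding theta_plus_lam_eq_mu_of rho_eq_rho_of
    using assms by (simp add: S_alpha_Suc S_beta_Suc_left add.commute)
qed

lemma theta_Suc_k1:
  assumes "k0 < k" "k0 \<le> k1"
  shows "rho k k0 k1 * (theta k x r k0 (Suc k1) - theta k x r k0 k1)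
       = real k0 * (x (Suc k1) - theta k x r k0 (Suc k1))"
proof -
  have "rho_of (real k) (real k0) (real k1) \<noteq> 0" "rho_of (real k) (real k0) (real k1 + 1) \<noteq> 0"
    using rho_pos[of k0 k k1] rho_pos[of k0 k "Suc k1"] assms by (auto simp: rho_eq_rho_of add.commute)
  from theta_of_shift_m[OF this, of "S_alpha x r k0" "S_beta x k0 k1" "x (Suc k1)"] show ?thesis
    using assms by (simp add: theta_eq_theta_of rho_eq_rho_of S_beta_Suc_right add.commute)
qed

lemma theta_plus_lam_eq_theta:
  assumes "0 < k0" "k0 < k" "k0 \<le> k1"
  shows "theta k x r k0 k1 + lam k x r k0 k1 = (S_alpha x r k0 + real k * theta k x r k0 k1) / real k0"
  unfolding theta_plus_lam_eq_mu_of unfolding theta_eq_theta_of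
  using rho_pos[OF assms(2,3)] assms(1) by (intro mu_of_eq_theta_of) (auto simp: rho_eq_rho_of)

lemma theta_increasing_in_k0:
  assumes sorted: "\<And>i j. 1 \<le> i \<Longrightarrow> i \<le> j \<Longrightarrow> j \<le> n \<Longrightarrow> x j \<le> x i"
    and "k \<le> n" "k \<le> k1"
    and init: "x (Suc k0) \<le> theta k x r k0 k1 + lam k x r k0 k1"
    and "k0 \<le> j" "j < k"
  shows "theta k x r k0 k1 \<le> theta k x r j k1 \<and> x (Suc j) \<le> theta k x r j k1 + lam k x r j k1"
  using \<open>k0 \<le> j\<close> \<open>j < k\<close>
proof (induction rule: dec_induct)
  case base
  then show ?case using init by simp
next
  case (step i)
  then have IH: "theta k x r k0 k1 \<le> theta k x r i k1" "x (Suc i) \<le> theta k x r i k1 + lam k x r i k1"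
    and i: "Suc i < k" "Suc i \<le> k1"
    using \<open>k \<le> k1\<close> by auto
  have rho: "rho k (Suc i) k1 > 0" "rho k i k1 > 0" using i by (auto intro: rho_pos)
  have "rho k (Suc i) k1 * (theta k x r (Suc i) k1 - theta k x r i k1) \<ge> 0"
    using theta_Suc_k0[OF i] IH(2) by simp
  then have theta_mono: "theta k x r i k1 \<le> theta k x r (Suc i) k1"
    using rho by (simp add: zero_le_mult_iff)
  have "rho k (Suc i) k1 * (theta k x r (Suc i) k1 + lam k x r (Suc i) k1 - x (Suc i)) \<ge> 0"
    using theta_plus_lam_Suc_k0[OF i] IH(2) rho by simp
  then have "x (Suc i) \<le> theta k x r (Suc i) k1 + lam k x r (Suc i) k1"
    using rho by (simp add: zero_le_mult_iff)
  moreover have "x (Suc (Suc i)) \<le> x (Suc i)"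
    using sorted i \<open>k \<le> n\<close> by simp
  ultimately show ?case using IH theta_mono by linarith
qed

lemma theta_decreasing_in_k1:
  assumes sorted: "\<And>i j. 1 \<le> i \<Longrightarrow> i \<le> j \<Longrightarrow> j \<le> n \<Longrightarrow> x j \<le> x i"
    and "k1 \<le> n" "k0 < k"
    and init: "theta k x r k0 k1 \<le> x k1"
    and "k \<le> m" "m \<le> k1"
  shows "theta k x r k0 m \<le> theta k x r k0 k1 \<and> theta k x r k0 m \<le> x m"
  using \<open>m \<le> k1\<close>
proof (induction rule: inc_induct)
  case base
  then show ?case using init by simp
next
  case (step i)
  then have IH: "theta k x r k0 (Suc i) \<le> theta k x r k0 k1" "theta k x r k0 (Suc i) \<le> x (Suc i)"
    by auto
  have i: "k0 < k" "k0 \<le> i" using \<open>k0 < k\<close> \<open>k \<le> m\<close> step by auto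
  have rho: "rho k k0 i > 0" using i by (rule rho_pos)
  have "rho k k0 i * (theta k x r k0 (Suc i) - theta k x r k0 i) \<ge> 0"
    using theta_Suc_k1[OF i] IH(2) by simp
  then have "theta k x r k0 i \<le> theta k x r k0 (Suc i)"
    using rho by (simp add: zero_le_mult_iff)
  moreover have "x (Suc i) \<le> x i"
    using sorted i step \<open>k \<le> m\<close> \<open>k0 < k\<close> \<open>k1 \<le> n\<close> by simp
  ultimately show ?case using IH by linarith
qed

lemma kkt5_along_k0:
  assumes sorted: "\<And>i j. 1 \<le> i \<Longrightarrow> i \<le> j \<Longrightarrow> j \<le> n \<Longrightarrow> x j \<le> x i"
    and "k \<le> n" "k \<le> k1"
    and "kkt3 n k x r k0 k1" "kkt5 n k x r k0 k1"
    and "k0 \<le> j" "j < k"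
  shows "kkt5 n k x r j k1"
proof -
  have "xext n x (Suc k0) = ereal (x (Suc k0))"
    using \<open>k0 \<le> j\<close> \<open>j < k\<close> \<open>k \<le> n\<close> by (simp add: xext_def)
  then have "x (Suc k0) \<le> theta k x r k0 k1 + lam k x r k0 k1"
    using \<open>kkt3 n k x r k0 k1\<close> by (simp add: kkt3_def)
  then have "theta k x r k0 k1 \<le> theta k x r j k1"
    using theta_increasing_in_k0[where n = n and x = x, OF sorted] assms(2,3,6,7) by blast
  then show ?thesis
    using \<open>kkt5 n k x r k0 k1\<close> unfolding kkt5_def by (meson ereal_less_eq(3) order_less_le_trans)
qed

lemma kkt2_along_k1:
  assumes sorted: "\<And>i j. 1 \<le> i \<Longrightarrow> i \<le> j \<Longrightarrow> j \<le> n \<Longrightarrow> x j \<le> x i"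
    and "k1 \<le> n" "k0 < k"
    and "kkt2 n k x r k0 k1" "kkt4 n k x r k0 k1"
    and "k \<le> m" "m \<le> k1"
  shows "kkt2 n k x r k0 m"
proof (cases "k0 = 0")
  case True
  then show ?thesis by (simp add: kkt2_def xext_def)
next
  case False
  have "xext n x k1 = ereal (x k1)"
    using assms(2,3,6,7) by (simp add: xext_def)
  then have "theta k x r k0 k1 \<le> x k1"
    using \<open>kkt4 n k x r k0 k1\<close> by (simp add: kkt4_def)
  then have "theta k x r k0 m \<le> theta k x r k0 k1"
    using theta_decreasing_in_k1[where n = n and x = x, OF sorted] assms(2,3,6,7) by blast
  then have "theta k x r k0 m + lam k x r k0 m \<le> theta k x r k0 k1 + lam k x r k0 k1"
    using False assms(3,6,7)
    by (simp add: theta_plus_lam_eq_theta divide_right_mono)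
  then show ?thesis
    using \<open>kkt2 n k x r k0 k1\<close> unfolding kkt2_def by (meson ereal_less_eq(3) order_le_less_trans)
qed

lemma esgs_visits_in_optimal_box:
  assumes sorted: "\<And>i j. 1 \<le> i \<Longrightarrow> i \<le> j \<Longrightarrow> j \<le> n \<Longrightarrow> x j \<le> x i"
    and "1 \<le> k" "k \<le> n"
    and "kb0 < k" "k \<le> kb1" "kb1 \<le> n"
    and opt: "all_kkt n k x r kb0 kb1"
    and "esgs_visits n k x r k0 k1"
  shows "kb0 \<le> k0 \<and> k0 < k \<and> k \<le> k1 \<and> k1 \<le> kb1"
  using \<open>esgs_visits n k x r k0 k1\<close>
proof (induction rule: esgs_visits.induct)
  case start
  then show ?case using assms(2,4,5) by simp
next
  case (inc k0 k1)
  have "kkt5 n k x r k0 kb1"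
    using kkt5_along_k0[where n = n and x = x, OF sorted \<open>k \<le> n\<close> \<open>k \<le> kb1\<close>] opt inc.IH
    unfolding all_kkt_def by blast
  then have "k1 \<noteq> kb1" using inc.hyps by auto
  then show ?case using inc.IH by simp
next
  case (dec k0 k1)
  have "kkt2 n k x r kb0 k1"
    using kkt2_along_k1[where n = n and x = x, OF sorted \<open>kb1 \<le> n\<close> \<open>kb0 < k\<close>] opt dec.IH
    unfolding all_kkt_def by blast
  then have "k0 \<noteq> kb0" using dec.hyps by auto
  then show ?case using dec.IH by auto
qed

theorem lemma3p6:
  fixes n k :: nat and r :: real and x :: "nat \<Rightarrow> real" and k0 k1 kb0 kb1 :: nat
  assumes "n \<ge> 2" and "1 \<le> k" and "k \<le> n"
    and "\<And>i j. 1 \<le> i \<Longrightarrow> i \<le> j \<Longrightarrow> j \<le> n \<Longrightarrow> x j \<le> x i"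
    and "(\<Sum>i=1..k. x i) > r"
    and "esgs_inc_transition n k x r k0 k1"
    and "kb0 \<le> k - 1" and "k \<le> kb1" and "kb1 \<le> n"
    and "all_kkt n k x r kb0 kb1"
  shows "kb0 \<le> k0 \<and> kb1 \<ge> k1"
proof -
  have "esgs_visits n k x r k0 k1"
    using \<open>esgs_inc_transition n k x r k0 k1\<close> by (simp add: esgs_inc_transition_def)
  moreover have "kb0 < k" using \<open>kb0 \<le> k - 1\<close> \<open>1 \<le> k\<close> by simp
  ultimately show ?thesis
    using esgs_visits_in_optimal_box[where n = n and x = x, OF assms(4)] assms(2,3,8,9,10) by blast
qed

end
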